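(* Let $S$ be a semigroup and let $M = S\cup\{1_M\}$ be the monoid obtained from $S$ by adjoining an identity element $1_M\notin S$ (so $1_M s = s1_M = s$ for all $s\in M$ and $S$ is a subsemigroup of $M$). Then $M$ is sofic.
   Context: A semigroup is a set with an associative binary operation. For a non-empty finite set $X$, $\mathrm{Map}(X)$ is the monoid of all maps $X\to X$ under composition (identity $\mathrm{Id}_X$) with the Hamming metric $d_X(f,g)=|\{x\in X : f(x)\ne g(x)\}|/|X|$. For a monoid $M$, finite $K\subset M$ and $\varepsilon,\alpha>0$, a map $\varphi\colon M\to\mathrm{Map}(X)$ is a $(K,\varepsilon)$-morphism if $d_X(\varphi(k_1k_2),\varphi(k_1)\varphi(k_2))\le\varepsilon$ for all $k_1,k_2\in K$ and $d_X(\varphi(1_M),\mathrm{Id}_X)\le\varepsilon$; it is $(K,\alpha)$-injective if $d_X(\varphi(k_1),\varphi(k_2))\ge\alpha$ for all distinct $k_1,k_2\in K$. $M$ is sofic if for every finite $K\subset M$ and every $\varepsilon>0$ there exist a non-empty finite set $X$ and a $(K,1-\varepsilon)$-injective $(K,\varepsilon)$-morphism $\varphi\colon M\to\mathrm{Map}(X)$. *)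

theory Defs
  imports Complex_Main
begin

text \<open>Normalized Hamming distance on maps of a finite set X (maps represented as
  functions nat => nat whose values matter only on X).\<close>
definition ham_dist :: "nat set \<Rightarrow> (nat \<Rightarrow> nat) \<Rightarrow> (nat \<Rightarrow> nat) \<Rightarrow> real" where
  "ham_dist X f g = real (card {x \<in> X. f x \<noteq> g x}) / real (card X)"

definition sofic_monoid :: "('m \<Rightarrow> 'm \<Rightarrow> 'm) \<Rightarrow> 'm \<Rightarrow> bool" where
  "sofic_monoid mult one \<longleftrightarrow>
    (\<forall>K :: 'm set. \<forall>\<epsilon> :: real. finite K \<and> \<epsilon> > 0 \<longrightarrow>
      (\<exists>(X :: nat set) (\<phi> :: 'm \<Rightarrow> nat \<Rightarrow> nat).
          finite X \<and> X \<noteq> {} \<and>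
          (\<forall>m. \<phi> m ` X \<subseteq> X) \<and>
          (\<forall>k1\<in>K. \<forall>k2\<in>K. ham_dist X (\<phi> (mult k1 k2)) (\<phi> k1 \<circ> \<phi> k2) \<le> \<epsilon>) \<and>
          ham_dist X (\<phi> one) id \<le> \<epsilon> \<and>
          (\<forall>k1\<in>K. \<forall>k2\<in>K. k1 \<noteq> k2 \<longrightarrow> ham_dist X (\<phi> k1) (\<phi> k2) \<ge> 1 - \<epsilon>)))"

text \<open>The monoid S \<union> {1} obtained by adjoining an identity: elements Some s for s in S,
  and None for the new identity.\<close>
fun adjoin_mult :: "'a::semigroup_mult option \<Rightarrow> 'a option \<Rightarrow> 'a option" where
  "adjoin_mult None y = y"
| "adjoin_mult (Some a) None = Some a"
| "adjoin_mult (Some a) (Some b) = Some (a * b)"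

end

theory Submission
  imports Defs
begin

text \<open>Fix a finite set \<open>T\<close> of elements of \<open>S\<close> containing every \<open>s\<close> and every product \<open>s t\<close>
  of elements of \<open>K\<close>, and let \<open>S\<close> act on \<open>T\<close> by left multiplication (with an arbitrary choice
  whenever the product leaves \<open>T\<close>). Now add a large number of padding points, each behaving like a
  copy of the adjoined identity: \<open>s\<close> sends every padding point to \<open>s \<in> T\<close>, and \<open>1\<^sub>M\<close> acts as
  the identity. On a padding point \<open>p\<close> we get \<open>s (t p) = s t = (s t) p\<close>, so the map is exactly
  multiplicative there, and distinct elements of \<open>K\<close> already disagree there. The errors are
  confined to the copy of \<open>T\<close>, whose proportion tends to \<open>0\<close> as the padding grows.\<close>

lemma ham_dist_le_if_agree_outside:
  assumes "finite D" "\<forall>x\<in>X - D. f x = g x"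
  shows "ham_dist X f g \<le> real (card D) / real (card X)"
proof -
  have "card {x\<in>X. f x \<noteq> g x} \<le> card D"
    by (rule card_mono) (use assms in auto)
  then show ?thesis
    unfolding ham_dist_def by (simp add: divide_right_mono)
qed

lemma ham_dist_ge_if_differ_on:
  assumes "finite X" "E \<subseteq> X" "\<forall>x\<in>E. f x \<noteq> g x"
  shows "real (card E) / real (card X) \<le> ham_dist X f g"
proof -
  have "card E \<le> card {x\<in>X. f x \<noteq> g x}"
    by (rule card_mono) (use assms in auto)
  then show ?thesis
    unfolding ham_dist_def by (simp add: divide_right_mono)
qed

definition exact_outside ::
    "('m \<Rightarrow> 'm \<Rightarrow> 'm) \<Rightarrow> 'm \<Rightarrow> 'm set \<Rightarrow> nat set \<Rightarrow> nat set \<Rightarrow> ('m \<Rightarrow> nat \<Rightarrow> nat) \<Rightarrow> bool" where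
  "exact_outside mult one K X D \<phi> \<longleftrightarrow>
    (\<forall>m. \<phi> m ` X \<subseteq> X) \<and>
    (\<forall>k1\<in>K. \<forall>k2\<in>K. \<forall>x\<in>X - D. \<phi> (mult k1 k2) x = \<phi> k1 (\<phi> k2 x)) \<and>
    (\<forall>x\<in>X - D. \<phi> one x = x) \<and>
    (\<forall>k1\<in>K. \<forall>k2\<in>K. k1 \<noteq> k2 \<longrightarrow> (\<forall>x\<in>X - D. \<phi> k1 x \<noteq> \<phi> k2 x))"

lemma sofic_monoidI:
  fixes mult :: "'m \<Rightarrow> 'm \<Rightarrow> 'm" and one :: 'm
  assumes "\<And>K \<epsilon>. finite K \<Longrightarrow> \<epsilon> > 0 \<Longrightarrow> \<exists>X D \<phi>.
    finite X \<and> D \<subseteq> X \<and> X - D \<noteq> {} \<and> real (card D) \<le> \<epsilon> * real (card X) \<and>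
    exact_outside mult one K X D \<phi>"
  shows "sofic_monoid mult one"
  unfolding sofic_monoid_def
proof (intro allI impI, elim conjE)
  fix K :: "'m set" and \<epsilon> :: real
  assume "finite K" "\<epsilon> > 0"
  from assms[OF this] obtain X :: "nat set" and D and \<phi> :: "'m \<Rightarrow> nat \<Rightarrow> nat"
    where X: "finite X" "D \<subseteq> X" "X - D \<noteq> {}"
    and small: "real (card D) \<le> \<epsilon> * real (card X)"
    and into: "\<forall>m. \<phi> m ` X \<subseteq> X"
    and exact_mult: "\<forall>k1\<in>K. \<forall>k2\<in>K. \<forall>x\<in>X - D. \<phi> (mult k1 k2) x = \<phi> k1 (\<phi> k2 x)"
    and exact_one: "\<forall>x\<in>X - D. \<phi> one x = x"
    and separating: "\<forall>k1\<in>K. \<forall>k2\<in>K. k1 \<noteq> k2 \<longrightarrow> (\<forall>x\<in>X - D. \<phi> k1 x \<noteq> \<phi> k2 x)"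
    unfolding exact_outside_def by (elim exE conjE) (rule that)
  have "finite D"
    using finite_subset[OF X(2,1)] .
  have "X \<noteq> {}"
    using X(3) by auto
  have card_pos: "real (card X) > 0"
    using \<open>finite X\<close> \<open>X \<noteq> {}\<close> by (simp add: card_gt_0_iff)
  have error_small: "real (card D) / real (card X) \<le> \<epsilon>"
    using small card_pos by (simp add: divide_le_eq)
  have card_diff: "real (card (X - D)) = real (card X) - real (card D)"
    using X \<open>finite D\<close> by (simp add: card_Diff_subset card_mono of_nat_diff)
  have "ham_dist X (\<phi> (mult k1 k2)) (\<phi> k1 \<circ> \<phi> k2) \<le> \<epsilon>" if "k1 \<in> K" "k2 \<in> K" for k1 k2
  proof -
    have "\<forall>x\<in>X - D. \<phi> (mult k1 k2) x = (\<phi> k1 \<circ> \<phi> k2) x"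
      using exact_mult that by simp
    from ham_dist_le_if_agree_outside[OF \<open>finite D\<close> this] show ?thesis
      using error_small by linarith
  qed
  moreover have "ham_dist X (\<phi> one) id \<le> \<epsilon>"
  proof -
    have "\<forall>x\<in>X - D. \<phi> one x = id x"
      using exact_one by simp
    from ham_dist_le_if_agree_outside[OF \<open>finite D\<close> this] show ?thesis
      using error_small by linarith
  qed
  moreover have "1 - \<epsilon> \<le> ham_dist X (\<phi> k1) (\<phi> k2)" if "k1 \<in> K" "k2 \<in> K" "k1 \<noteq> k2" for k1 k2
  proof -
    have "1 - \<epsilon> \<le> real (card (X - D)) / real (card X)"
      using error_small card_pos by (simp add: card_diff diff_divide_distrib)
    also have "\<dots> \<le> ham_dist X (\<phi> k1) (\<phi> k2)"
      using separating that by (intro ham_dist_ge_if_differ_on) (use X in auto)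
    finally show ?thesis .
  qed
  ultimately show "\<exists>X \<phi>. finite X \<and> X \<noteq> {} \<and> (\<forall>m. \<phi> m ` X \<subseteq> X) \<and>
      (\<forall>k1\<in>K. \<forall>k2\<in>K. ham_dist X (\<phi> (mult k1 k2)) (\<phi> k1 \<circ> \<phi> k2) \<le> \<epsilon>) \<and>
      ham_dist X (\<phi> one) id \<le> \<epsilon> \<and>
      (\<forall>k1\<in>K. \<forall>k2\<in>K. k1 \<noteq> k2 \<longrightarrow> 1 - \<epsilon> \<le> ham_dist X (\<phi> k1) (\<phi> k2))"
    using X(1) \<open>X \<noteq> {}\<close> into by (intro exI[of _ X] exI[of _ \<phi>]) simp
qed

text \<open>The points \<open>x < n\<close> encode the elements \<open>dec x\<close> of the finite set \<open>dec ` {..<n}\<close>; the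
  points \<open>x \<ge> n\<close> are padding points, on which \<open>s\<close> acts as on the identity element. A result
  that falls outside the encoded set is replaced by \<open>x\<close> itself.\<close>

definition padded_action :: "(nat \<Rightarrow> 'a::semigroup_mult) \<Rightarrow> nat \<Rightarrow> 'a option \<Rightarrow> nat \<Rightarrow> nat" where
  "padded_action dec n m x =
    (case m of
      None \<Rightarrow> x
    | Some s \<Rightarrow>
        let y = (if x < n then s * dec x else s)
        in if y \<in> dec ` {..<n} then the_inv_into {..<n} dec y else x)"

lemma padded_action_into:
  assumes "inj_on dec {..<n}"
  shows "padded_action dec n m ` {..<n + N} \<subseteq> {..<n + N}"
proof -
  have "the_inv_into {..<n} dec y < n + N" if "y \<in> dec ` {..<n}" for y
    using the_inv_into_into[OF assms that, of "{..<n + N}"] by auto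
  then show ?thesis
    unfolding padded_action_def by (auto simp: Let_def split: option.split)
qed

lemma padded_action_padding:
  assumes "inj_on dec {..<n}" "n \<le> x" "s \<in> dec ` {..<n}"
  shows "padded_action dec n (Some s) x = the_inv_into {..<n} dec s"
  using assms by (simp add: padded_action_def)

lemma padded_action_mult:
  assumes "inj_on dec {..<n}" "n \<le> x"
    and "set_option k2 \<subseteq> dec ` {..<n}" "set_option (adjoin_mult k1 k2) \<subseteq> dec ` {..<n}"
  shows "padded_action dec n (adjoin_mult k1 k2) x = padded_action dec n k1 (padded_action dec n k2 x)"
proof (cases k1)
  case None
  then show ?thesis by (simp add: padded_action_def)
next
  case (Some s)
  show ?thesis
  proof (cases k2)
    case None
    then show ?thesis using Some by (simp add: padded_action_def)
  next
    case (Some t)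
    have t: "t \<in> dec ` {..<n}" and st: "s * t \<in> dec ` {..<n}"
      using assms(3,4) Some \<open>k1 = Some s\<close> by auto
    have code_t: "the_inv_into {..<n} dec t < n" and decode_t: "dec (the_inv_into {..<n} dec t) = t"
      using the_inv_into_into[OF assms(1) t, of "{..<n}"] f_the_inv_into_f[OF assms(1) t] by auto
    have "padded_action dec n k1 (padded_action dec n k2 x) = the_inv_into {..<n} dec (s * t)"
      using padded_action_padding[OF assms(1,2) t] Some \<open>k1 = Some s\<close> code_t decode_t st
      by (simp add: padded_action_def)
    also have "\<dots> = padded_action dec n (adjoin_mult k1 k2) x"
      using padded_action_padding[OF assms(1,2) st] Some \<open>k1 = Some s\<close> by simp
    finally show ?thesis ..
  qed
qed

lemma padded_action_separates:
  assumes "inj_on dec {..<n}" "n \<le> x"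
    and "set_option k1 \<subseteq> dec ` {..<n}" "set_option k2 \<subseteq> dec ` {..<n}" "k1 \<noteq> k2"
  shows "padded_action dec n k1 x \<noteq> padded_action dec n k2 x"
proof -
  have code_lt: "the_inv_into {..<n} dec s < n" if "s \<in> dec ` {..<n}" for s
    using the_inv_into_into[OF assms(1) that, of "{..<n}"] by auto
  have code_inj: "the_inv_into {..<n} dec s \<noteq> the_inv_into {..<n} dec t"
    if "s \<in> dec ` {..<n}" "t \<in> dec ` {..<n}" "s \<noteq> t" for s t
    using that f_the_inv_into_f[OF assms(1)] by metis
  have padding_lt: "padded_action dec n (Some s) x < n" if "s \<in> dec ` {..<n}" for s
    using padded_action_padding[OF assms(1,2) that] code_lt[OF that] by simp
  have "padded_action dec n None x = x"
    by (simp add: padded_action_def)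
  then show ?thesis
    using assms padding_lt padded_action_padding[OF assms(1,2)] code_inj
    by (cases k1; cases k2) (auto simp: less_le_not_le)
qed

lemma padded_action_exact_outside:
  assumes "inj_on dec {..<n}"
    and "\<forall>k\<in>K. set_option k \<subseteq> dec ` {..<n}"
    and "\<forall>k1\<in>K. \<forall>k2\<in>K. set_option (adjoin_mult k1 k2) \<subseteq> dec ` {..<n}"
  shows "exact_outside adjoin_mult None K {..<n + N} {..<n} (padded_action dec n)"
  unfolding exact_outside_def
proof (intro conjI allI ballI impI)
  fix m
  show "padded_action dec n m ` {..<n + N} \<subseteq> {..<n + N}"
    using assms(1) by (rule padded_action_into)
next
  fix k1 k2 x
  assume "k1 \<in> K" "k2 \<in> K" "x \<in> {..<n + N} - {..<n}"
  then show "padded_action dec n (adjoin_mult k1 k2) x = padded_action dec n k1 (padded_action dec n k2 x)"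
    using assms by (intro padded_action_mult) auto
next
  fix x
  show "padded_action dec n None x = x"
    by (simp add: padded_action_def)
next
  fix k1 k2 x
  assume "k1 \<in> K" "k2 \<in> K" "k1 \<noteq> k2" "x \<in> {..<n + N} - {..<n}"
  then show "padded_action dec n k1 x \<noteq> padded_action dec n k2 x"
    using assms by (intro padded_action_separates) auto
qed

theorem proposition4p8:
  shows "sofic_monoid (adjoin_mult :: 'a::semigroup_mult option \<Rightarrow> 'a option \<Rightarrow> 'a option) None"
proof (rule sofic_monoidI)
  fix K :: "'a option set" and \<epsilon> :: real
  assume "finite K" "\<epsilon> > 0"
  define T where "T = (\<Union>k\<in>K. set_option k) \<union> (\<Union>k1\<in>K. \<Union>k2\<in>K. set_option (adjoin_mult k1 k2))"
  have "finite T"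
    using \<open>finite K\<close> by (simp add: T_def)
  then obtain n and dec :: "nat \<Rightarrow> 'a" where T: "T = dec ` {..<n}" and dec: "inj_on dec {..<n}"
    using finite_imp_nat_seg_image_inj_on by (metis lessThan_def)
  obtain N :: nat where "real n / \<epsilon> < real N"
    using reals_Archimedean2 by blast
  then have n_lt: "real n < \<epsilon> * real N"
    using \<open>\<epsilon> > 0\<close> by (simp add: divide_less_eq mult.commute)
  then have "{..<n + N} - {..<n} \<noteq> {}"
    by (cases N) (auto intro: exI[of _ n])
  moreover have "real (card {..<n}) \<le> \<epsilon> * real (card {..<n + N})"
    using n_lt \<open>\<epsilon> > 0\<close> by (simp add: distrib_left) (smt (verit) mult_nonneg_nonneg of_nat_0_le_iff)
  moreover have "exact_outside adjoin_mult None K {..<n + N} {..<n} (padded_action dec n)"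
    using dec by (rule padded_action_exact_outside) (auto simp: T_def T[symmetric])
  ultimately show "\<exists>X D \<phi>. finite X \<and> D \<subseteq> X \<and> X - D \<noteq> {} \<and>
      real (card D) \<le> \<epsilon> * real (card X) \<and> exact_outside adjoin_mult None K X D \<phi>"
    by (intro exI[of _ "{..<n + N}"] exI[of _ "{..<n}"] exI[of _ "padded_action dec n"]) simp
qed

end
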